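(* Assume Assumptions 1 and 2 for some $\delta>0$. For distinct $u_1,u_2\in L$, let $N_{u_1u_2}$ be the number of common neighbors of $u_1$ and $u_2$ in the bipartite graph $G_b$. Then, as $n_R\to\infty$, $$\Pr[N_{u_1u_2}\ge 2\mid S_L,S_R,(u_1,u_2)\in E]=O(p_{u_1u_2}),$$ where $p_{u_1u_2}=\frac{M_{R2}}{M_{R1}^2}\cdot\frac{w_{u_1}w_{u_2}}{n_R}$.
   Context: Model: left nodes $L$ ($|L|=n_L$), right nodes $R$ ($|R|=n_R$), weight sequences $S_L=(w_u)_{u\in L}$, $S_R=(w_v)_{v\in R}$ of positive reals; $M_{Lk}=\frac1{n_L}\sum_{u\in L}w_u^k$, $M_{Rk}=\frac1{n_R}\sum_{v\in R}w_v^k$. The random bipartite graph $G_b=(L\sqcup R,E_b)$ contains each edge $(u,v)$, $u\in L$, $v\in R$, independently with probability $\min\left(\frac{w_uw_v}{n_RM_{R1}},1\right)$. The projected graph is $G=(L,E)$ with $(u,u')\in E$ for distinct $u,u'\in L$ iff there is $z\in R$ with $(u,z),(u',z)\in E_b$. Assumption 1: $\frac{w_uw_v}{n_RM_{R1}}\le1$ for all $u\in L,v\in R$. Assumption 2 (parameter $\delta>0$), as $n_L,n_R\to\infty$: $\max(S_L\cup S_R)=O(n_R^{1/2-\delta})$, $\min S_L=\Omega(1)$, $M_{R2}=O(M_{R1}^2)$, $M_{R4}=O(n_R^{1-2\delta})$. *)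

theory Defs
  imports "HOL-Probability.Probability" "HOL-Library.Landau_Symbols"
begin

text \<open>Left nodes are 0..<nL, right nodes are 0..<nR; weights are functions on nat.\<close>

definition moment :: "nat \<Rightarrow> (nat \<Rightarrow> real) \<Rightarrow> nat \<Rightarrow> real" where
  "moment n w k = (\<Sum>i<n. w i ^ k) / real n"

definition edge_prob :: "nat \<Rightarrow> (nat \<Rightarrow> real) \<Rightarrow> (nat \<Rightarrow> real) \<Rightarrow> nat \<Rightarrow> nat \<Rightarrow> real" where
  "edge_prob nR wL wR u v = min (wL u * wR v / (real nR * moment nR wR 1)) 1"

definition bip_graph :: "nat \<Rightarrow> nat \<Rightarrow> (nat \<Rightarrow> real) \<Rightarrow> (nat \<Rightarrow> real) \<Rightarrow> (nat \<times> nat \<Rightarrow> bool) pmf" where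
  "bip_graph nL nR wL wR =
     Pi_pmf ({..<nL} \<times> {..<nR}) False (\<lambda>(u, v). bernoulli_pmf (edge_prob nR wL wR u v))"

definition common_nbrs :: "nat \<Rightarrow> (nat \<times> nat \<Rightarrow> bool) \<Rightarrow> nat \<Rightarrow> nat \<Rightarrow> nat" where
  "common_nbrs nR Eb u1 u2 = card {z \<in> {..<nR}. Eb (u1, z) \<and> Eb (u2, z)}"

definition proj_edge :: "nat \<Rightarrow> (nat \<times> nat \<Rightarrow> bool) \<Rightarrow> nat \<Rightarrow> nat \<Rightarrow> bool" where
  "proj_edge nR Eb u u' \<longleftrightarrow> u \<noteq> u' \<and> (\<exists>z \<in> {..<nR}. Eb (u, z) \<and> Eb (u', z))"

definition cond_prob_pmf :: "'a pmf \<Rightarrow> 'a set \<Rightarrow> 'a set \<Rightarrow> real" where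
  "cond_prob_pmf p A B = measure_pmf.prob p (A \<inter> B) / measure_pmf.prob p B"

end

theory Submission
  imports Defs
begin

text \<open>
  Write \<open>A\<^sub>z\<close> for the event that the right node \<open>z\<close> is adjacent to both \<open>u\<^sub>1\<close> and \<open>u\<^sub>2\<close>.
  The projected edge is the union of the \<open>A\<^sub>z\<close>, and \<open>N\<^sub>u\<^sub>1\<^sub>u\<^sub>2 \<ge> 2\<close> means that some \<open>A\<^sub>z\<close>
  occurs together with the union of the others. That union depends on edges disjoint from
  those of \<open>A\<^sub>z\<close>, hence is independent of \<open>A\<^sub>z\<close> and contained in the projected edge. A union
  bound therefore gives \<open>P(N \<ge> 2) \<le> (\<Sum>\<^sub>z P(A\<^sub>z)) P(N \<ge> 1)\<close>, and
  \<open>\<Sum>\<^sub>z P(A\<^sub>z) \<le> \<Sum>\<^sub>z w\<^sub>u\<^sub>1 w\<^sub>u\<^sub>2 w\<^sub>z\<^sup>2 / (n\<^sub>R M\<^sub>R\<^sub>1)\<^sup>2 = p\<^sub>u\<^sub>1\<^sub>u\<^sub>2\<close>.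
  The bound thus holds with constant 1 for every \<open>n\<^sub>R\<close>; of the hypotheses only the
  positivity of the weights is needed.
\<close>

lemma measure_pair_pmf_Times:
  "measure_pmf.prob (pair_pmf M N) (A \<times> B) = measure_pmf.prob M A * measure_pmf.prob N B"
proof -
  have "measure_pmf.prob (pair_pmf M N) (A \<times> B) =
        measure_pmf.prob (pair_pmf M N) ((A \<inter> set_pmf M) \<times> (B \<inter> set_pmf N))"
    by (intro measure_prob_cong_0) (auto simp: pmf_pair set_pmf_eq)
  also have "\<dots> = measure_pmf.prob M (A \<inter> set_pmf M) * measure_pmf.prob N (B \<inter> set_pmf N)"
    by (rule measure_pmf_prob_product) auto
  finally show ?thesis by (simp add: measure_Int_set_pmf)
qed

lemma measure_Pi_pmf_indep_coords:
  fixes p :: "'a \<Rightarrow> 'b pmf"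
  assumes "finite I" "C \<subseteq> I"
    and A: "\<And>f g. (\<forall>x\<in>C. f x = g x) \<Longrightarrow> f \<in> A \<longleftrightarrow> g \<in> A"
    and B: "\<And>f g. (\<forall>x. x \<notin> C \<longrightarrow> f x = g x) \<Longrightarrow> f \<in> B \<longleftrightarrow> g \<in> B"
  shows "measure_pmf.prob (Pi_pmf I d p) (A \<inter> B)
       = measure_pmf.prob (Pi_pmf I d p) A * measure_pmf.prob (Pi_pmf I d p) B"
proof -
  define glue :: "('a \<Rightarrow> 'b) \<times> ('a \<Rightarrow> 'b) \<Rightarrow> 'a \<Rightarrow> 'b"
    where "glue = (\<lambda>(f, g) x. if x \<in> C then f x else g x)"
  have "Pi_pmf I d p = Pi_pmf (C \<union> (I - C)) d p"
    using \<open>C \<subseteq> I\<close> by (simp add: Un_absorb1)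
  also have "\<dots> = map_pmf glue (pair_pmf (Pi_pmf C d p) (Pi_pmf (I - C) d p))"
    unfolding glue_def using assms(1,2) by (intro Pi_pmf_union) (auto intro: finite_subset)
  finally have split: "Pi_pmf I d p = \<dots>" .
  have "glue (f, g) \<in> A \<longleftrightarrow> f \<in> A" for f g by (rule A) (simp add: glue_def)
  moreover have "glue (f, g) \<in> B \<longleftrightarrow> g \<in> B" for f g by (rule B) (simp add: glue_def)
  ultimately have "glue -` (A \<inter> B) = A \<times> B" "glue -` A = A \<times> UNIV" "glue -` B = UNIV \<times> B"
    by auto
  then show ?thesis
    unfolding split measure_map_pmf by (simp add: measure_pair_pmf_Times)
qed

lemma measure_Pi_pmf_all_True:
  assumes "finite I" "C \<subseteq> I"
  shows "measure_pmf.prob (Pi_pmf I d p) {f. \<forall>x\<in>C. f x} = (\<Prod>x\<in>C. pmf (p x) True)"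
proof -
  have "{f. \<forall>x\<in>C. f x} = Pi I (\<lambda>x. if x \<in> C then {True} else UNIV)"
    using assms(2) by (auto simp: Pi_def)
  then have "measure_pmf.prob (Pi_pmf I d p) {f. \<forall>x\<in>C. f x}
           = (\<Prod>x\<in>I. if x \<in> C then pmf (p x) True else 1)"
    using assms(1) by (simp add: measure_Pi_pmf_Pi if_distrib measure_pmf_single cong: if_cong)
  also have "\<dots> = (\<Prod>x\<in>C. pmf (p x) True)"
    using assms by (simp add: prod.If_cases Int_absorb1)
  finally show ?thesis .
qed

lemma cond_prob_pmf_nonneg: "0 \<le> cond_prob_pmf M A B"
  by (simp add: cond_prob_pmf_def)

lemma prob_at_least_two_le:
  fixes M :: "'a pmf" and A :: "'b \<Rightarrow> 'a set"
  assumes "finite Z"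
    and indep: "\<And>z. z \<in> Z \<Longrightarrow> measure_pmf.prob M (A z \<inter> (\<Union>z'\<in>Z - {z}. A z'))
                  = measure_pmf.prob M (A z) * measure_pmf.prob M (\<Union>z'\<in>Z - {z}. A z')"
  shows "measure_pmf.prob M {x. 2 \<le> card {z \<in> Z. x \<in> A z}}
       \<le> (\<Sum>z\<in>Z. measure_pmf.prob M (A z)) * measure_pmf.prob M (\<Union>z\<in>Z. A z)"
proof -
  define others where "others z = (\<Union>z'\<in>Z - {z}. A z')" for z
  have "{x. 2 \<le> card {z \<in> Z. x \<in> A z}} \<subseteq> (\<Union>z\<in>Z. A z \<inter> others z)"
  proof
    fix x assume "x \<in> {x. 2 \<le> card {z \<in> Z. x \<in> A z}}"
    then obtain z z' where "z \<in> Z" "z' \<in> Z" "z \<noteq> z'" "x \<in> A z" "x \<in> A z'"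
      by (auto simp: numeral_2_eq_2 card_le_Suc_iff)
    then show "x \<in> (\<Union>z\<in>Z. A z \<inter> others z)" by (auto simp: others_def)
  qed
  then have "measure_pmf.prob M {x. 2 \<le> card {z \<in> Z. x \<in> A z}}
           \<le> measure_pmf.prob M (\<Union>z\<in>Z. A z \<inter> others z)"
    by (rule measure_pmf.finite_measure_mono) simp
  also have "\<dots> \<le> (\<Sum>z\<in>Z. measure_pmf.prob M (A z \<inter> others z))"
    using \<open>finite Z\<close> by (intro measure_pmf.finite_measure_subadditive_finite) auto
  also have "\<dots> = (\<Sum>z\<in>Z. measure_pmf.prob M (A z) * measure_pmf.prob M (others z))"
    by (intro sum.cong refl) (simp add: indep others_def)
  also have "\<dots> \<le> (\<Sum>z\<in>Z. measure_pmf.prob M (A z) * measure_pmf.prob M (\<Union>z\<in>Z. A z))"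
    by (intro sum_mono mult_left_mono measure_pmf.finite_measure_mono) (auto simp: others_def)
  finally show ?thesis by (simp add: sum_distrib_right)
qed

lemma cond_prob_at_least_two_le:
  fixes M :: "'a pmf" and A :: "'b \<Rightarrow> 'a set"
  assumes "finite Z"
    and indep: "\<And>z. z \<in> Z \<Longrightarrow> measure_pmf.prob M (A z \<inter> (\<Union>z'\<in>Z - {z}. A z'))
                  = measure_pmf.prob M (A z) * measure_pmf.prob M (\<Union>z'\<in>Z - {z}. A z')"
  shows "cond_prob_pmf M {x. 2 \<le> card {z \<in> Z. x \<in> A z}} (\<Union>z\<in>Z. A z)
       \<le> (\<Sum>z\<in>Z. measure_pmf.prob M (A z))"
proof -
  let ?two = "{x. 2 \<le> card {z \<in> Z. x \<in> A z}}" and ?any = "\<Union>z\<in>Z. A z"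
  have "?two \<subseteq> ?any"
    by (auto simp: numeral_2_eq_2 card_le_Suc_iff)
  then have "cond_prob_pmf M ?two ?any = measure_pmf.prob M ?two / measure_pmf.prob M ?any"
    by (simp add: cond_prob_pmf_def Int_absorb2)
  also have "\<dots> \<le> (\<Sum>z\<in>Z. measure_pmf.prob M (A z))"
    using prob_at_least_two_le[OF assms]
    by (cases "measure_pmf.prob M ?any = 0")
       (auto simp: divide_le_eq zero_less_measure_iff sum_nonneg)
  finally show ?thesis .
qed

lemma moment_nonneg:
  assumes "\<And>v. v < n \<Longrightarrow> w v \<ge> 0"
  shows "moment n w k \<ge> 0"
  unfolding moment_def using assms by (intro divide_nonneg_nonneg sum_nonneg) auto

lemma edge_prob_bounds:
  assumes "wL u > 0" "v < nR" "\<And>v. v < nR \<Longrightarrow> wR v > 0"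
  shows "0 \<le> edge_prob nR wL wR u v"
    and "edge_prob nR wL wR u v \<le> wL u * wR v / (real nR * moment nR wR 1)"
proof -
  have "moment nR wR 1 \<ge> 0"
    using assms(3) by (intro moment_nonneg) (simp add: less_imp_le)
  then have "0 \<le> wL u * wR v / (real nR * moment nR wR 1)"
    using assms(1) assms(3)[OF assms(2)] by (intro divide_nonneg_nonneg mult_nonneg_nonneg) auto
  then show "0 \<le> edge_prob nR wL wR u v"
    by (simp add: edge_prob_def)
  show "edge_prob nR wL wR u v \<le> wL u * wR v / (real nR * moment nR wR 1)"
    by (simp add: edge_prob_def)
qed

lemma sum_edge_prob_products_le:
  assumes "wL u1 > 0" "wL u2 > 0" "\<And>v. v < nR \<Longrightarrow> wR v > 0"
  shows "(\<Sum>z<nR. edge_prob nR wL wR u1 z * edge_prob nR wL wR u2 z)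
       \<le> moment nR wR 2 / (moment nR wR 1)\<^sup>2 * (wL u1 * wL u2 / real nR)"
proof -
  let ?D = "real nR * moment nR wR 1"
  have "(\<Sum>z<nR. edge_prob nR wL wR u1 z * edge_prob nR wL wR u2 z)
      \<le> (\<Sum>z<nR. (wL u1 * wR z / ?D) * (wL u2 * wR z / ?D))"
    using assms by (intro sum_mono mult_mono' edge_prob_bounds) auto
  also have "\<dots> = wL u1 * wL u2 / ?D\<^sup>2 * (\<Sum>z<nR. wR z ^ 2)"
    unfolding sum_distrib_left by (intro sum.cong refl) (simp add: power2_eq_square)
  also have "\<dots> = moment nR wR 2 / (moment nR wR 1)\<^sup>2 * (wL u1 * wL u2 / real nR)"
    by (cases "nR = 0") (simp_all add: moment_def power2_eq_square field_simps)
  finally show ?thesis .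
qed

lemma common_nbrs_as_card:
  "common_nbrs nR Eb u1 u2 = card {z \<in> {..<nR}. Eb \<in> {f. f (u1, z) \<and> f (u2, z)}}"
  by (simp add: common_nbrs_def)

lemma proj_edge_as_Union:
  "u1 \<noteq> u2 \<Longrightarrow>
   {Eb. proj_edge nR Eb u1 u2} = (\<Union>z\<in>{..<nR}. {f. f (u1, z) \<and> f (u2, z)})"
  by (auto simp: proj_edge_def)

lemma cond_prob_common_nbrs_le:
  assumes u: "u1 < nL" "u2 < nL" "u1 \<noteq> u2"
    and wL_pos: "\<And>u. u < nL \<Longrightarrow> wL u > 0"
    and wR_pos: "\<And>v. v < nR \<Longrightarrow> wR v > 0"
  shows "cond_prob_pmf (bip_graph nL nR wL wR)
           {Eb. common_nbrs nR Eb u1 u2 \<ge> 2} {Eb. proj_edge nR Eb u1 u2}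
       \<le> moment nR wR 2 / (moment nR wR 1)\<^sup>2 * (wL u1 * wL u2 / real nR)"
proof -
  define I where "I = {..<nL} \<times> {..<nR}"
  define p where "p = (\<lambda>(u, v). bernoulli_pmf (edge_prob nR wL wR u v))"
  define A where "A z = {f. f (u1, z) \<and> f (u2, z)}" for z :: nat
  define coords where "coords z = {(u1, z), (u2, z)}" for z :: nat
  have G: "bip_graph nL nR wL wR = Pi_pmf I False p"
    by (simp add: bip_graph_def I_def p_def)
  have coords_I: "coords z \<subseteq> I" if "z < nR" for z
    using u that by (auto simp: coords_def I_def)
  have A_all_True: "A z = {f. \<forall>x\<in>coords z. f x}" for z
    by (auto simp: A_def coords_def)
  have "measure_pmf.prob (Pi_pmf I False p) (A z \<inter> (\<Union>z'\<in>{..<nR} - {z}. A z'))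
      = measure_pmf.prob (Pi_pmf I False p) (A z)
      * measure_pmf.prob (Pi_pmf I False p) (\<Union>z'\<in>{..<nR} - {z}. A z')"
    if "z \<in> {..<nR}" for z
    using coords_I that u(3)
    by (intro measure_Pi_pmf_indep_coords[where C = "coords z"])
       (auto simp: I_def A_all_True coords_def)
  then have "cond_prob_pmf (Pi_pmf I False p)
               {f. 2 \<le> card {z \<in> {..<nR}. f \<in> A z}} (\<Union>z\<in>{..<nR}. A z)
           \<le> (\<Sum>z<nR. measure_pmf.prob (Pi_pmf I False p) (A z))"
    by (intro cond_prob_at_least_two_le) auto
  also have "\<dots> = (\<Sum>z<nR. edge_prob nR wL wR u1 z * edge_prob nR wL wR u2 z)"
  proof (intro sum.cong refl)
    fix z assume z: "z \<in> {..<nR}"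
    have "edge_prob nR wL wR u z \<in> {0..1}" if "u < nL" for u
      using edge_prob_bounds(1)[of wL u z nR wR] wL_pos that z wR_pos
      by (simp add: edge_prob_def)
    then have "(\<Prod>x\<in>coords z. pmf (p x) True)
             = edge_prob nR wL wR u1 z * edge_prob nR wL wR u2 z"
      using u by (simp add: coords_def p_def)
    then show "measure_pmf.prob (Pi_pmf I False p) (A z)
             = edge_prob nR wL wR u1 z * edge_prob nR wL wR u2 z"
      using coords_I z by (simp add: A_all_True measure_Pi_pmf_all_True I_def)
  qed
  also have "\<dots> \<le> moment nR wR 2 / (moment nR wR 1)\<^sup>2 * (wL u1 * wL u2 / real nR)"
    using u wL_pos wR_pos by (intro sum_edge_prob_products_le) auto
  finally show ?thesis
    by (simp add: G A_def common_nbrs_as_card proj_edge_as_Union[OF u(3)])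
qed

theorem mainTheorem5:
  fixes nL nR :: "nat \<Rightarrow> nat"
    and wL wR :: "nat \<Rightarrow> nat \<Rightarrow> real"
    and \<delta> :: real
  assumes nL_lim: "filterlim nL at_top sequentially"
    and nR_lim: "filterlim nR at_top sequentially"
    and wL_pos: "\<And>m u. u < nL m \<Longrightarrow> wL m u > 0"
    and wR_pos: "\<And>m v. v < nR m \<Longrightarrow> wR m v > 0"
    and assm1: "\<And>m u v. u < nL m \<Longrightarrow> v < nR m \<Longrightarrow>
                  wL m u * wR m v / (real (nR m) * moment (nR m) (wR m) 1) \<le> 1"
    and delta_pos: "\<delta> > 0"
    and max_bound: "(\<lambda>m. Max (wL m ` {..<nL m} \<union> wR m ` {..<nR m}))
                      \<in> O(\<lambda>m. real (nR m) powr (1/2 - \<delta>))"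
    and min_bound: "(\<lambda>m. Min (wL m ` {..<nL m})) \<in> \<Omega>(\<lambda>m. 1)"
    and M2_bound: "(\<lambda>m. moment (nR m) (wR m) 2) \<in> O(\<lambda>m. (moment (nR m) (wR m) 1)\<^sup>2)"
    and M4_bound: "(\<lambda>m. moment (nR m) (wR m) 4) \<in> O(\<lambda>m. real (nR m) powr (1 - 2 * \<delta>))"
  shows "\<forall>u1 u2 :: nat \<Rightarrow> nat.
           (\<forall>m. u1 m < nL m \<and> u2 m < nL m \<and> u1 m \<noteq> u2 m) \<longrightarrow>
           (\<lambda>m. cond_prob_pmf (bip_graph (nL m) (nR m) (wL m) (wR m))
                   {Eb. common_nbrs (nR m) Eb (u1 m) (u2 m) \<ge> 2}
                   {Eb. proj_edge (nR m) Eb (u1 m) (u2 m)})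
           \<in> O(\<lambda>m. moment (nR m) (wR m) 2 / (moment (nR m) (wR m) 1)\<^sup>2
                     * (wL m (u1 m) * wL m (u2 m) / real (nR m)))"
proof (intro allI impI)
  fix u1 u2 :: "nat \<Rightarrow> nat"
  assume u: "\<forall>m. u1 m < nL m \<and> u2 m < nL m \<and> u1 m \<noteq> u2 m"
  show "(\<lambda>m. cond_prob_pmf (bip_graph (nL m) (nR m) (wL m) (wR m))
               {Eb. common_nbrs (nR m) Eb (u1 m) (u2 m) \<ge> 2}
               {Eb. proj_edge (nR m) Eb (u1 m) (u2 m)})
        \<in> O(\<lambda>m. moment (nR m) (wR m) 2 / (moment (nR m) (wR m) 1)\<^sup>2
                  * (wL m (u1 m) * wL m (u2 m) / real (nR m)))"
  proof (rule bigoI[where c = 1], intro always_eventually allI)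
    fix m
    have "cond_prob_pmf (bip_graph (nL m) (nR m) (wL m) (wR m))
            {Eb. common_nbrs (nR m) Eb (u1 m) (u2 m) \<ge> 2}
            {Eb. proj_edge (nR m) Eb (u1 m) (u2 m)}
        \<le> moment (nR m) (wR m) 2 / (moment (nR m) (wR m) 1)\<^sup>2
            * (wL m (u1 m) * wL m (u2 m) / real (nR m))"
      using u wL_pos wR_pos by (intro cond_prob_common_nbrs_le[where nL = "nL m"]) auto
    then show "norm (cond_prob_pmf (bip_graph (nL m) (nR m) (wL m) (wR m))
                 {Eb. common_nbrs (nR m) Eb (u1 m) (u2 m) \<ge> 2}
                 {Eb. proj_edge (nR m) Eb (u1 m) (u2 m)})
        \<le> 1 * norm (moment (nR m) (wR m) 2 / (moment (nR m) (wR m) 1)\<^sup>2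
                     * (wL m (u1 m) * wL m (u2 m) / real (nR m)))"
      unfolding real_norm_def mult_1 abs_of_nonneg[OF cond_prob_pmf_nonneg]
      using abs_ge_self order_trans by blast
  qed
qed

end
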